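(* Let $k\ge1$, let $(x_{i+1/2})_{i\in\mathbb{Z}}$ be an arbitrary mesh and $(\bar v_i)_{i\in\mathbb{Z}}$ an arbitrary real sequence, and let $s_i$ and $v^\pm_{i+1/2}$ be the ENO stencil indices and cell interface values of the $k$th order ENO reconstruction. Then $s_i\le s_{i+1}$ for all $i$, and $$v^+_{i+1/2}-v^-_{i+1/2}=\sum_{s=s_i}^{s_{i+1}-1}[\bar v_s,\dots,\bar v_{s+k}]\,X_{i,s},\qquad X_{i,s}=(x_{s+k+1/2}-x_{s-1/2})\prod_{\substack{m=0\\ m\neq i-s}}^{k-1}(x_{i+1/2}-x_{s+m+1/2}),$$ where the sum is empty (equal to $0$) when $s_i=s_{i+1}$.
   Context: Mesh: a strictly increasing sequence $(x_{i+1/2})_{i\in\mathbb{Z}}$ of reals with $x_{i+1/2}\to\pm\infty$ as $i\to\pm\infty$; cells $I_i=[x_{i-1/2},x_{i+1/2})$ with lengths $\Delta x_i=x_{i+1/2}-x_{i-1/2}$. Given a real sequence $(\bar v_i)_{i\in\mathbb{Z}}$, the divided differences are defined by $[\bar v_i]=\bar v_i$ and, for $i<j$, $[\bar v_i,\dots,\bar v_j]=\frac{[\bar v_{i+1},\dots,\bar v_j]-[\bar v_i,\dots,\bar v_{j-1}]}{x_{j+1/2}-x_{i-1/2}}$. The $k$th order ENO reconstruction: for each $i$, set $s_i^1=i$, and for $\ell=1,\dots,k-1$ set $s_i^{\ell+1}=s_i^\ell-1$ if $\bigl|[\bar v_{s_i^\ell-1},\dots,\bar v_{s_i^\ell+\ell-1}]\bigr|<\bigl|[\bar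 v_{s_i^\ell},\dots,\bar v_{s_i^\ell+\ell}]\bigr|$, and $s_i^{\ell+1}=s_i^\ell$ otherwise; put $s_i=s_i^k\in\{i-k+1,\dots,i\}$. Then $p_i$ is the unique polynomial of degree at most $k-1$ with $\frac{1}{\Delta x_j}\int_{I_j}p_i(x)\,dx=\bar v_j$ for $j=s_i,\dots,s_i+k-1$. The cell interface values are $v^-_{i+1/2}=p_i(x_{i+1/2})$ and $v^+_{i+1/2}=p_{i+1}(x_{i+1/2})$. *)

theory Defs
  imports "HOL-Analysis.Analysis" "HOL-Computational_Algebra.Polynomial"
begin

text \<open>Convention: the mesh is a function xm :: int => real with xm i = x_{i+1/2}.
  Hence x_{i-1/2} = xm (i - 1) and cell I_i = [xm (i-1), xm i).\<close>

text \<open>Divided difference [v_i, ..., v_{i+n}] (n+1 entries).\<close>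
fun divdiff :: "(int \<Rightarrow> real) \<Rightarrow> (int \<Rightarrow> real) \<Rightarrow> int \<Rightarrow> nat \<Rightarrow> real" where
  "divdiff xm v i 0 = v i"
| "divdiff xm v i (Suc n) =
     (divdiff xm v (i + 1) n - divdiff xm v i n) / (xm (i + int (Suc n)) - xm (i - 1))"

text \<open>eno_aux xm v i l = s_i^{l+1}.\<close>
fun eno_aux :: "(int \<Rightarrow> real) \<Rightarrow> (int \<Rightarrow> real) \<Rightarrow> int \<Rightarrow> nat \<Rightarrow> int" where
  "eno_aux xm v i 0 = i"
| "eno_aux xm v i (Suc l) =
     (let s = eno_aux xm v i l in
      if \<bar>divdiff xm v (s - 1) (Suc l)\<bar> < \<bar>divdiff xm v s (Suc l)\<bar> then s - 1 else s)"

definition eno_stencil :: "nat \<Rightarrow> (int \<Rightarrow> real) \<Rightarrow> (int \<Rightarrow> real) \<Rightarrow> int \<Rightarrow> int" where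
  "eno_stencil k xm v i = eno_aux xm v i (k - 1)"

definition cell_avg :: "(int \<Rightarrow> real) \<Rightarrow> real poly \<Rightarrow> int \<Rightarrow> real" where
  "cell_avg xm p j = integral {xm (j - 1)..xm j} (poly p) / (xm j - xm (j - 1))"

definition eno_poly :: "nat \<Rightarrow> (int \<Rightarrow> real) \<Rightarrow> (int \<Rightarrow> real) \<Rightarrow> int \<Rightarrow> real poly" where
  "eno_poly k xm v i =
     (THE p. degree p \<le> k - 1 \<and>
        (\<forall>j. eno_stencil k xm v i \<le> j \<and> j \<le> eno_stencil k xm v i + int k - 1
              \<longrightarrow> cell_avg xm p j = v j))"

definition eno_minus :: "nat \<Rightarrow> (int \<Rightarrow> real) \<Rightarrow> (int \<Rightarrow> real) \<Rightarrow> int \<Rightarrow> real" where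
  "eno_minus k xm v i = poly (eno_poly k xm v i) (xm i)"

definition eno_plus :: "nat \<Rightarrow> (int \<Rightarrow> real) \<Rightarrow> (int \<Rightarrow> real) \<Rightarrow> int \<Rightarrow> real" where
  "eno_plus k xm v i = poly (eno_poly k xm v (i + 1)) (xm i)"

definition eno_X :: "nat \<Rightarrow> (int \<Rightarrow> real) \<Rightarrow> int \<Rightarrow> int \<Rightarrow> real" where
  "eno_X k xm i s = (xm (s + int k) - xm (s - 1)) *
     (\<Prod>m\<in>{m. m < k \<and> int m \<noteq> i - s}. (xm i - xm (s + int m)))"

end

theory Submission
  imports Defs
begin

text \<open>
  Let \<open>V\<close> be a primitive of the cell masses, \<open>V j - V (j - 1) = \<Delta>x j * v j\<close>. A polynomial of
  degree \<open>< k\<close> has the cell averages \<open>v j\<close> on the cells \<open>s, \<dots>, s + k - 1\<close> iff it is the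
  derivative of the polynomial \<open>Q s\<close> of degree \<open>\<le> k\<close> interpolating \<open>V\<close> at the \<open>k + 1\<close>
  interfaces of these cells; hence \<open>p i\<close> is the derivative of \<open>Q (s i)\<close>. By the Neville--Aitken
  recursion the leading coefficient of \<open>Q s\<close> is \<open>[v s, \<dots>, v (s + k - 1)]\<close>, so \<open>Q (s + 1) - Q s\<close>,
  which vanishes at the \<open>k\<close> common interfaces \<open>x (s + m + 1/2)\<close>, \<open>m < k\<close>, is
  \<open>[v s, \<dots>, v (s + k)] (x (s + k + 1/2) - x (s - 1/2))\<close> times \<open>\<Prod>m<k. X - x (s + m + 1/2)\<close>.
  For \<open>s i \<le> s < s (i + 1)\<close> the interface \<open>x (i + 1/2)\<close> is one of these roots, and the derivative
  of the product there is the product in \<open>X i s\<close>; telescoping over \<open>s\<close> gives the jump.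
  The stencils are monotone because at every stage of the selection \<open>s\<^sup>\<ell> i \<le> s\<^sup>\<ell> (i + 1)\<close>,
  and equal stencils make the same choice.
\<close>

lemma sum_int_telescope:
  fixes f :: "int \<Rightarrow> 'a::ab_group_add"
  assumes "a \<le> b"
  shows "(\<Sum>s\<in>{a..b - 1}. f (s + 1) - f s) = f b - f a"
proof -
  have "(\<Sum>s\<in>{a..a + int n - 1}. f (s + 1) - f s) = f (a + int n) - f a" for n
  proof (induction n)
    case (Suc n)
    have "{a..a + int (Suc n) - 1} = insert (a + int n) {a..a + int n - 1}" by auto
    with Suc show ?case by (simp add: algebra_simps)
  qed simp
  from this[of "nat (b - a)"] assms show ?thesis by simp
qed

lemma ex_pderiv_eq: "\<exists>P. pderiv P = (p :: 'a::field_char_0 poly)"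
proof -
  define P where "P = (\<Sum>i\<le>degree p. monom (coeff p i / of_nat (Suc i)) (Suc i))"
  have "pderiv P = (\<Sum>i\<le>degree p. monom (coeff p i) i)"
    unfolding P_def higher_pderiv_sum[of 1, simplified] pderiv_monom
    by (intro sum.cong) (auto simp del: of_nat_Suc)
  then show ?thesis using poly_as_sum_of_monoms[of p] by auto
qed

lemma integral_poly_pderiv:
  fixes a b :: real
  assumes "a \<le> b"
  shows "integral {a..b} (poly (pderiv P)) = poly P b - poly P a"
proof -
  have "(poly (pderiv P) has_integral (poly P b - poly P a)) {a..b}"
  proof (rule fundamental_theorem_of_calculus[OF assms])
    fix x
    have "(poly P has_real_derivative poly (pderiv P) x) (at x within {a..b})"
      by (rule DERIV_subset[OF poly_DERIV]) simp
    then show "(poly P has_vector_derivative poly (pderiv P) x) (at x within {a..b})"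
      using has_real_derivative_iff_has_vector_derivative by blast
  qed
  then show ?thesis by blast
qed

lemma cell_avg_pderiv:
  assumes "strict_mono xm"
  shows "cell_avg xm (pderiv P) j = (poly P (xm j) - poly P (xm (j - 1))) / (xm j - xm (j - 1))"
proof -
  have "xm (j - 1) \<le> xm j" using strict_monoD[OF assms, of "j - 1" j] by simp
  then show ?thesis unfolding cell_avg_def by (simp add: integral_poly_pderiv)
qed

lemma inj_on_shifted_nodes:
  fixes xm :: "int \<Rightarrow> 'a"
  assumes "inj xm"
  shows "inj_on (\<lambda>t. xm (a + int t)) A"
  using assms by (auto intro!: inj_onI dest: injD)

lemma poly_eq_const_on_consecutive_nodes:
  fixes xm :: "int \<Rightarrow> real"
  assumes "inj xm" "degree R \<le> k" "\<And>t. t \<le> k \<Longrightarrow> poly R (xm (a + int t)) = c"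
  shows "R = [:c:]"
proof (rule poly_eqI_degree[of "(\<lambda>t. xm (a + int t)) ` {0..k}"])
  have "card ((\<lambda>t. xm (a + int t)) ` {0..k}) = Suc k"
    using inj_on_shifted_nodes[OF assms(1)] by (simp add: card_image)
  then show "degree R < card ((\<lambda>t. xm (a + int t)) ` {0..k})"
    "degree [:c:] < card ((\<lambda>t. xm (a + int t)) ` {0..k})" using assms(2) by auto
qed (use assms(3) in auto)

lemma pderiv_eq_if_cell_increments_eq:
  fixes xm :: "int \<Rightarrow> real"
  assumes "inj xm" "degree P \<le> k" "degree Q \<le> k"
    and "\<And>j. s \<le> j \<Longrightarrow> j \<le> s + int k - 1 \<Longrightarrow>
           poly P (xm j) - poly P (xm (j - 1)) = poly Q (xm j) - poly Q (xm (j - 1))"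
  shows "pderiv P = pderiv Q"
proof -
  define R where "R = P - Q"
  have R_step: "poly R (xm (s + int t)) = poly R (xm (s - 1 + int t))" if "t < k" for t
    using assms(4)[of "s + int t"] that by (simp add: R_def algebra_simps)
  have "poly R (xm (s - 1 + int t)) = poly R (xm (s - 1))" if "t \<le> k" for t
    using that
  proof (induction t)
    case (Suc t)
    have "s - 1 + int (Suc t) = s + int t" by simp
    with Suc R_step[of t] show ?case by simp
  qed simp
  moreover have "degree R \<le> k" unfolding R_def by (rule degree_diff_le[OF assms(2,3)])
  ultimately have "R = [:poly R (xm (s - 1)):]"
    by (intro poly_eq_const_on_consecutive_nodes[OF assms(1)]) auto
  then have "pderiv R = 0" by (metis pderiv_eq_0_iff degree_pCons_0)
  then show ?thesis by (simp add: R_def pderiv_diff)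
qed

subsection \<open>Neville--Aitken interpolation of the primitive\<close>

definition cell_primitive :: "(int \<Rightarrow> real) \<Rightarrow> (int \<Rightarrow> real) \<Rightarrow> int \<Rightarrow> real" where
  "cell_primitive xm v j =
     (if 0 \<le> j then (\<Sum>t\<in>{1..j}. (xm t - xm (t - 1)) * v t)
      else - (\<Sum>t\<in>{j + 1..0}. (xm t - xm (t - 1)) * v t))"

lemma cell_primitive_diff:
  "cell_primitive xm v j - cell_primitive xm v (j - 1) = (xm j - xm (j - 1)) * v j"
proof -
  consider "j \<ge> 1" | "j = 0" | "j < 0" by linarith
  then show ?thesis
  proof cases
    case 1
    then have "{1..j} = insert j {1..j - 1}" by auto
    with 1 show ?thesis by (simp add: cell_primitive_def)
  next
    case 3
    then have "{j..0} = insert j {j + 1..0}" by auto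
    with 3 show ?thesis by (simp add: cell_primitive_def)
  qed (simp add: cell_primitive_def)
qed

text \<open>\<open>neville xm V a n\<close> interpolates \<open>V\<close> at the nodes \<open>xm (a - 1), \<dots>, xm (a - 1 + n)\<close>, matching
  the index convention of \<open>divdiff\<close>.\<close>
fun neville :: "(int \<Rightarrow> real) \<Rightarrow> (int \<Rightarrow> real) \<Rightarrow> int \<Rightarrow> nat \<Rightarrow> real poly" where
  "neville xm V a 0 = [:V (a - 1):]"
| "neville xm V a (Suc n) = smult (1 / (xm (a + int n) - xm (a - 1)))
     ([:- xm (a - 1), 1:] * neville xm V (a + 1) n - [:- xm (a + int n), 1:] * neville xm V a n)"

lemma degree_linear_mult_le:
  fixes q :: "'a::idom poly"
  assumes "degree q \<le> n" shows "degree ([:c, 1:] * q) \<le> Suc n"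
proof -
  have "degree ([:c, 1:] * q) \<le> degree [:c, 1:] + degree q" by (rule degree_mult_le)
  then show ?thesis using assms by simp
qed

lemma degree_neville: "degree (neville xm V a n) \<le> n"
proof (induction n arbitrary: a)
  case (Suc n)
  have "degree ([:- xm (a - 1), 1:] * neville xm V (a + 1) n) \<le> Suc n"
    "degree ([:- xm (a + int n), 1:] * neville xm V a n) \<le> Suc n"
    using Suc by (simp_all del: mult_pCons_left add: degree_linear_mult_le)
  from degree_diff_le[OF this] show ?case by (simp del: mult_pCons_left)
qed simp

lemma poly_neville_node:
  assumes "inj xm" "t \<le> n"
  shows "poly (neville xm V a n) (xm (a - 1 + int t)) = V (a - 1 + int t)"
  using assms(2)
proof (induction n arbitrary: a t)
  case (Suc n)
  have ne: "xm (a + int n) - xm (a - 1) \<noteq> 0"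
    using injD[OF assms(1), of "a + int n" "a - 1"] by auto
  consider "t = 0" | "t = Suc n" | t' where "t = Suc t'" "t' < n"
    using Suc.prems by (cases t) (auto simp: le_less)
  then show ?case
  proof cases
    case 1
    with Suc.IH[of 0 a] ne show ?thesis by (simp add: field_simps)
  next
    case 2
    with Suc.IH[of n "a + 1"] ne show ?thesis by (simp add: field_simps)
  next
    case 3
    with Suc.IH[of t' "a + 1"] Suc.IH[of t a] ne show ?thesis by (simp add: field_simps)
  qed
qed simp

lemma coeff_neville_Suc:
  "coeff (neville xm V a (Suc n)) (Suc n) =
     (coeff (neville xm V (a + 1) n) n - coeff (neville xm V a n) n) / (xm (a + int n) - xm (a - 1))"
proof -
  have "coeff ([:c, 1:] * q) (Suc n) = coeff q n" if "degree q \<le> n" for c and q :: "real poly"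
    using that by (auto simp: coeff_eq_0)
  from this[OF degree_neville] show ?thesis
    by (simp del: mult_pCons_left add: divide_simps)
qed

lemma coeff_neville_cell_primitive:
  assumes "inj xm"
  shows "coeff (neville xm (cell_primitive xm v) a (Suc n)) (Suc n) = divdiff xm v a n"
proof (induction n arbitrary: a)
  case 0
  have "xm a - xm (a - 1) \<noteq> 0" using injD[OF assms, of a "a - 1"] by auto
  then show ?case using cell_primitive_diff[of xm v a] by (simp add: coeff_neville_Suc)
next
  case (Suc n)
  show ?case unfolding coeff_neville_Suc[of xm _ a "Suc n"] Suc by simp
qed

lemma eno_poly_eq_pderiv_neville:
  assumes "strict_mono xm" "k \<ge> 1"
  shows "eno_poly k xm v i = pderiv (neville xm (cell_primitive xm v) (eno_stencil k xm v i) k)"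
  unfolding eno_poly_def
proof (rule the_equality)
  define s where "s = eno_stencil k xm v i"
  define Q where "Q = neville xm (cell_primitive xm v) s k"
  have inj: "inj xm" using assms(1) strict_mono_on_imp_inj_on by blast
  have width: "xm j - xm (j - 1) \<noteq> 0" for j
    using strict_monoD[OF assms(1), of "j - 1" j] by simp
  have Q_incr: "poly Q (xm j) - poly Q (xm (j - 1)) = (xm j - xm (j - 1)) * v j"
    if "s \<le> j" "j \<le> s + int k - 1" for j
    using poly_neville_node[OF inj, of "nat (j - s + 1)" k _ s]
          poly_neville_node[OF inj, of "nat (j - s)" k _ s] that cell_primitive_diff[of xm v j]
    unfolding Q_def by simp
  have deg_Q: "degree Q \<le> k" unfolding Q_def by (rule degree_neville)
  show "degree (pderiv Q) \<le> k - 1 \<and>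
        (\<forall>j. s \<le> j \<and> j \<le> s + int k - 1 \<longrightarrow> cell_avg xm (pderiv Q) j = v j)"
    using Q_incr width deg_Q by (auto simp: degree_pderiv cell_avg_pderiv[OF assms(1)])
  fix p
  assume p: "degree p \<le> k - 1 \<and> (\<forall>j. s \<le> j \<and> j \<le> s + int k - 1 \<longrightarrow> cell_avg xm p j = v j)"
  obtain P where P: "pderiv P = p" using ex_pderiv_eq by blast
  have deg_P: "degree P \<le> k" using p assms(2) degree_pderiv[of P] unfolding P by linarith
  have "poly P (xm j) - poly P (xm (j - 1)) = poly Q (xm j) - poly Q (xm (j - 1))"
    if "s \<le> j" "j \<le> s + int k - 1" for j
  proof -
    have "cell_avg xm (pderiv P) j = v j" using p that P by simp
    with width[of j] show ?thesis
      unfolding Q_incr[OF that] cell_avg_pderiv[OF assms(1)] by (simp add: field_simps)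
  qed
  from pderiv_eq_if_cell_increments_eq[OF inj deg_P deg_Q this] P show "p = pderiv Q" by simp
qed

definition node_poly :: "(int \<Rightarrow> real) \<Rightarrow> nat \<Rightarrow> int \<Rightarrow> real poly" where
  "node_poly xm k s = (\<Prod>m<k. [:- xm (s + int m), 1:])"

lemma degree_node_poly: "degree (node_poly xm k s) = k"
  unfolding node_poly_def by (subst degree_prod_sum_eq) auto

lemma coeff_node_poly_degree: "coeff (node_poly xm k s) k = 1"
  using lead_coeff_prod[of "\<lambda>m. [:- xm (s + int m), 1:]" "{..<k}"] degree_node_poly[of xm k s]
  unfolding node_poly_def by simp

lemma poly_node_poly_at_node: "m < k \<Longrightarrow> poly (node_poly xm k s) (xm (s + int m)) = 0"
  unfolding node_poly_def poly_prod by (rule prod_zero) auto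

lemma poly_pderiv_node_poly_at_node:
  assumes "m0 < k"
  shows "poly (pderiv (node_poly xm k s)) (xm (s + int m0)) =
           (\<Prod>m\<in>{..<k} - {m0}. xm (s + int m0) - xm (s + int m))"
proof -
  let ?x = "xm (s + int m0)"
  let ?term = "\<lambda>a. \<Prod>m\<in>{..<k} - {a}. ?x - xm (s + int m)"
  have "poly (pderiv (node_poly xm k s)) ?x = (\<Sum>a\<in>{..<k}. ?term a)"
    unfolding node_poly_def pderiv_prod poly_sum by (simp add: poly_prod pderiv_pCons)
  also have "\<dots> = ?term m0 + (\<Sum>a\<in>{..<k} - {m0}. ?term a)"
    using assms by (simp add: sum.remove)
  also have "(\<Sum>a\<in>{..<k} - {m0}. ?term a) = 0"
    using assms by (intro sum.neutral ballI prod_zero) auto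
  finally show ?thesis by simp
qed

lemma neville_shift_diff:
  assumes "inj xm" "k \<ge> 1"
  shows "neville xm (cell_primitive xm v) (s + 1) k - neville xm (cell_primitive xm v) s k =
           smult (divdiff xm v s k * (xm (s + int k) - xm (s - 1))) (node_poly xm k s)"
    (is "?D = smult ?c _")
proof (rule poly_eqI_degree_lead_coeff[where n = k and A = "(\<lambda>m. xm (s + int m)) ` {..<k}"])
  obtain n where k: "k = Suc n" using assms(2) by (cases k) auto
  have "xm (s + int k) - xm (s - 1) \<noteq> 0" using injD[OF assms(1), of "s + int k" "s - 1"] by auto
  then show "coeff ?D k = coeff (smult ?c (node_poly xm k s)) k"
    unfolding k coeff_diff coeff_smult coeff_neville_cell_primitive[OF assms(1)]
      coeff_node_poly_degree by simp
  show "k \<le> card ((\<lambda>m. xm (s + int m)) ` {..<k})"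
    using inj_on_shifted_nodes[OF assms(1)] by (simp add: card_image)
  show "degree ?D \<le> k" using degree_diff_le[OF degree_neville degree_neville] .
  show "degree (smult ?c (node_poly xm k s)) \<le> k"
    using degree_node_poly[of xm k s] degree_smult_le order.trans by metis
  fix z assume "z \<in> (\<lambda>m. xm (s + int m)) ` {..<k}"
  then obtain m where m: "m < k" "z = xm (s + int m)" by auto
  then show "poly ?D z = poly (smult ?c (node_poly xm k s)) z"
    using poly_neville_node[OF assms(1), of m k _ "s + 1"]
          poly_neville_node[OF assms(1), of "Suc m" k _ s]
    by (simp add: poly_node_poly_at_node add.commute)
qed

lemma poly_pderiv_neville_shift_diff:
  assumes "inj xm" "k \<ge> 1" "s \<le> i" "i < s + int k"
  shows "poly (pderiv (neville xm (cell_primitive xm v) (s + 1) k)) (xm i)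
           - poly (pderiv (neville xm (cell_primitive xm v) s k)) (xm i)
         = divdiff xm v s k * eno_X k xm i s"
proof -
  define m0 where "m0 = nat (i - s)"
  have m0: "m0 < k" "i = s + int m0" using assms(3,4) by (auto simp: m0_def)
  have nodes: "{..<k} - {m0} = {m. m < k \<and> int m \<noteq> i - s}" using m0 by auto
  show ?thesis
    unfolding poly_diff[symmetric] pderiv_diff[symmetric] neville_shift_diff[OF assms(1,2)]
      pderiv_smult poly_smult
    by (simp add: m0(2) poly_pderiv_node_poly_at_node[OF m0(1)] eno_X_def nodes[unfolded m0(2)])
qed

subsection \<open>Monotonicity of the ENO stencils\<close>

lemma eno_aux_bounds: "i - int l \<le> eno_aux xm v i l \<and> eno_aux xm v i l \<le> i"
  by (induction l) (auto simp: Let_def)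

lemma eno_aux_mono: "eno_aux xm v i l \<le> eno_aux xm v (i + 1) l"
proof (induction l)
  case (Suc l)
  then consider "eno_aux xm v i l = eno_aux xm v (i + 1) l" | "eno_aux xm v i l < eno_aux xm v (i + 1) l"
    by linarith
  then show ?case by cases (auto simp: Let_def)
qed simp

theorem mainTheorem2:
  fixes k :: nat and xm :: "int \<Rightarrow> real" and v :: "int \<Rightarrow> real"
  assumes "k \<ge> 1"
    and "strict_mono xm"
    and "filterlim xm at_top at_top"
    and "filterlim xm at_bot at_bot"
  shows "\<forall>i. eno_stencil k xm v i \<le> eno_stencil k xm v (i + 1) \<and>
           eno_plus k xm v i - eno_minus k xm v i =
             (\<Sum>s\<in>{eno_stencil k xm v i..eno_stencil k xm v (i + 1) - 1}.
                divdiff xm v s k * eno_X k xm i s)"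
proof
  fix i
  define f where "f s = poly (pderiv (neville xm (cell_primitive xm v) s k)) (xm i)" for s
  let ?s0 = "eno_stencil k xm v i" and ?s1 = "eno_stencil k xm v (i + 1)"
  have inj: "inj xm" using assms(2) strict_mono_on_imp_inj_on by blast
  have mono: "?s0 \<le> ?s1" unfolding eno_stencil_def by (rule eno_aux_mono)
  have "i - int (k - 1) \<le> ?s0" "?s1 \<le> i + 1"
    unfolding eno_stencil_def using eno_aux_bounds by blast+
  then have "s \<le> i" "i < s + int k" if "s \<in> {?s0..?s1 - 1}" for s
    using that assms(1) by auto
  then have "f (s + 1) - f s = divdiff xm v s k * eno_X k xm i s" if "s \<in> {?s0..?s1 - 1}" for s
    unfolding f_def using that by (intro poly_pderiv_neville_shift_diff[OF inj assms(1)])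
  then have "(\<Sum>s\<in>{?s0..?s1 - 1}. divdiff xm v s k * eno_X k xm i s) = f ?s1 - f ?s0"
    using sum_int_telescope[OF mono, of f] by simp
  also have "\<dots> = eno_plus k xm v i - eno_minus k xm v i"
    unfolding eno_plus_def eno_minus_def f_def eno_poly_eq_pderiv_neville[OF assms(2,1)] ..
  finally show "?s0 \<le> ?s1 \<and> eno_plus k xm v i - eno_minus k xm v i =
                 (\<Sum>s\<in>{?s0..?s1 - 1}. divdiff xm v s k * eno_X k xm i s)"
    using mono by simp
qed

end
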